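(* Let $(f_m)$ be a frame in $H=\mathcal{L}^2(I)$ with frame bounds $A,B>0$. For each $m$ let $\alpha^m=(\alpha^m_1,\dots,\alpha^m_N)\in(\mathcal{L}^\infty(I))^N$ be scale functions with $\Lambda_m:=\max\{\|\alpha^m_n\|_\infty: n=1,\dots,N\}<1$, and let $f_m*_{T_m}0$ denote the fractal convolution of $f_m$ with the null function with respect to $\alpha^m$. Suppose $$R:=\sum_m\left(\frac{\Lambda_m}{1-\Lambda_m}\right)^2\|f_m\|_2^2<A.$$ Then $(f_m*_{T_m}0)$ is a frame in $H$ with frame bounds $A\left(1-\sqrt{R/A}\right)^2$ and $B\left(1+\sqrt{R/B}\right)^2$.
   Context: Let $N\ge 2$, $I=[x_0,x_N]$, $\Delta: x_0<\dots<x_N$ a fixed partition, $L_n(x)=a_nx+b_n$ affine with $L_n(x_0)=x_{n-1}$, $L_n(x_N)=x_n$, $I_1=[x_0,x_1]$, $I_n=(x_{n-1},x_n]$ for $n\ge2$. For scale functions $\alpha=(\alpha_n)\in(\mathcal{L}^\infty(I))^N$ with $\operatorname{ess\,sup}_{n,x}|\alpha_n(x)|<1$ and $f,b\in\mathcal{L}^2(I)$, the fractal convolution $f*_Tb$ is the unique fixed point in $\mathcal{L}^2(I)$ of the contraction $Tg(x):=f(x)+\alpha_n(L_n^{-1}(x))(g-b)(L_n^{-1}(x))$, $x\in I_n$. A sequence $(g_m)$ in a separable Hilbert space $H$ is a frame with frame bounds $A,B>0$ if $A\|f\|^2\le\sum_m|\langle f,g_m\rangle|^2\le B\|f\|^2$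 for all $f\in H$. *)

theory Defs
  imports "HOL-Analysis.Analysis" "HOL-Probability.Essential_Supremum"
begin

text \<open>Functions are real-valued representatives; L2(I) and Linf(I) are taken w.r.t.
  Lebesgue measure on I = [x 0, x N].\<close>

definition sq_int :: "real set \<Rightarrow> (real \<Rightarrow> real) \<Rightarrow> bool" where
  "sq_int I f \<longleftrightarrow> f \<in> borel_measurable (lebesgue_on I) \<and>
      integrable (lebesgue_on I) (\<lambda>t. (f t)\<^sup>2)"

definition L2_inner :: "real set \<Rightarrow> (real \<Rightarrow> real) \<Rightarrow> (real \<Rightarrow> real) \<Rightarrow> real" where
  "L2_inner I f g = integral\<^sup>L (lebesgue_on I) (\<lambda>t. f t * g t)"

definition L2_norm :: "real set \<Rightarrow> (real \<Rightarrow> real) \<Rightarrow> real" where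
  "L2_norm I f = sqrt (integral\<^sup>L (lebesgue_on I) (\<lambda>t. (f t)\<^sup>2))"

definition Linf_norm :: "real set \<Rightarrow> (real \<Rightarrow> real) \<Rightarrow> ereal" where
  "Linf_norm I h = esssup (lebesgue_on I) (\<lambda>t. ereal \<bar>h t\<bar>)"

definition is_frame :: "real set \<Rightarrow> (nat \<Rightarrow> real \<Rightarrow> real) \<Rightarrow> real \<Rightarrow> real \<Rightarrow> bool" where
  "is_frame I g A B \<longleftrightarrow> A > 0 \<and> B > 0 \<and> (\<forall>m. sq_int I (g m)) \<and>
     (\<forall>h. sq_int I h \<longrightarrow>
        summable (\<lambda>m. (L2_inner I h (g m))\<^sup>2) \<and>
        A * (L2_norm I h)\<^sup>2 \<le> (\<Sum>m. (L2_inner I h (g m))\<^sup>2) \<and>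
        (\<Sum>m. (L2_inner I h (g m))\<^sup>2) \<le> B * (L2_norm I h)\<^sup>2)"

definition is_partition :: "(nat \<Rightarrow> real) \<Rightarrow> nat \<Rightarrow> bool" where
  "is_partition x N \<longleftrightarrow> N \<ge> 2 \<and> (\<forall>k<N. x k < x (Suc k))"

definition Ival :: "(nat \<Rightarrow> real) \<Rightarrow> nat \<Rightarrow> real set" where
  "Ival x N = {x 0 .. x N}"

definition Lmap :: "(nat \<Rightarrow> real) \<Rightarrow> nat \<Rightarrow> nat \<Rightarrow> real \<Rightarrow> real" where
  "Lmap x N n t = x (n - 1) + (t - x 0) * (x n - x (n - 1)) / (x N - x 0)"

definition Linv :: "(nat \<Rightarrow> real) \<Rightarrow> nat \<Rightarrow> nat \<Rightarrow> real \<Rightarrow> real" where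
  "Linv x N n t = x 0 + (t - x (n - 1)) * (x N - x 0) / (x n - x (n - 1))"

definition Isub :: "(nat \<Rightarrow> real) \<Rightarrow> nat \<Rightarrow> real set" where
  "Isub x n = (if n = 1 then {x 0 .. x 1} else {x (n - 1) <.. x n})"

definition Top :: "(nat \<Rightarrow> real) \<Rightarrow> nat \<Rightarrow> (nat \<Rightarrow> real \<Rightarrow> real) \<Rightarrow>
    (real \<Rightarrow> real) \<Rightarrow> (real \<Rightarrow> real) \<Rightarrow> (real \<Rightarrow> real) \<Rightarrow> real \<Rightarrow> real" where
  "Top x N \<alpha> f b g t =
     f t + (\<Sum>n\<in>{1..N}. (if t \<in> Isub x n then
        \<alpha> n (Linv x N n t) * (g (Linv x N n t) - b (Linv x N n t)) else 0))"

text \<open>g is (a representative of) the fractal convolution f *_T b: the fixed point of T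
  in L2(I), equality being a.e. on I.\<close>
definition is_fractal_conv :: "(nat \<Rightarrow> real) \<Rightarrow> nat \<Rightarrow> (nat \<Rightarrow> real \<Rightarrow> real) \<Rightarrow>
    (real \<Rightarrow> real) \<Rightarrow> (real \<Rightarrow> real) \<Rightarrow> (real \<Rightarrow> real) \<Rightarrow> bool" where
  "is_fractal_conv x N \<alpha> f b g \<longleftrightarrow> sq_int (Ival x N) g \<and>
     (AE t in lebesgue_on (Ival x N). g t = Top x N \<alpha> f b g t)"

end

theory Submission
  imports Defs
begin

(* On each subinterval I_n the defect g_m - f_m of the fractal convolution g_m = f_m *_{T_m} 0
   is the function alpha^m_n g_m transported by the affine map L_n^{-1} : I_n -> I.  As the
   weights |I_n| / |I| sum to 1, this gives ||g_m - f_m|| <= Lambda_m ||g_m||, and together with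
   ||g_m|| <= ||f_m|| + ||g_m - f_m|| it yields ||g_m - f_m|| <= Lambda_m / (1 - Lambda_m) ||f_m||,
   so that sum_m ||g_m - f_m||^2 <= R < A.  Now the classical perturbation argument for frames
   applies: in <h, g_m> = <h, f_m> + <h, g_m - f_m> the second sequence has l2-norm at most
   sqrt R ||h|| by Cauchy-Schwarz, so by Minkowski's inequality in l2 the l2-norm of
   (<h, g_m>)_m lies between (sqrt A - sqrt R) ||h|| and (sqrt B + sqrt R) ||h||. *)

section \<open>Square-integrable functions\<close>

definition square_integrable :: "'a measure \<Rightarrow> ('a \<Rightarrow> real) \<Rightarrow> bool" where
  "square_integrable M f \<longleftrightarrow> f \<in> borel_measurable M \<and> integrable M (\<lambda>t. (f t)\<^sup>2)"

lemma sq_int_iff_square_integrable: "sq_int I f \<longleftrightarrow> square_integrable (lebesgue_on I) f"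
  by (simp add: sq_int_def square_integrable_def)

lemma square_integrable_mult:
  assumes "square_integrable M f" "square_integrable M g"
  shows "integrable M (\<lambda>t. f t * g t)"
proof (rule Bochner_Integration.integrable_bound[where f="\<lambda>t. (f t)\<^sup>2 + (g t)\<^sup>2"])
  show "integrable M (\<lambda>t. (f t)\<^sup>2 + (g t)\<^sup>2)" "(\<lambda>t. f t * g t) \<in> borel_measurable M"
    using assms by (auto simp: square_integrable_def)
  have "\<bar>a * b\<bar> \<le> a\<^sup>2 + b\<^sup>2" for a b :: real
  proof -
    have "2 * (\<bar>a\<bar> * \<bar>b\<bar>) \<le> a\<^sup>2 + b\<^sup>2"
      using sum_squares_bound[of "\<bar>a\<bar>" "\<bar>b\<bar>"] by (simp add: mult.assoc)
    moreover have "0 \<le> \<bar>a\<bar> * \<bar>b\<bar>"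
      by simp
    ultimately show ?thesis
      unfolding abs_mult by linarith
  qed
  then show "AE t in M. norm (f t * g t) \<le> norm ((f t)\<^sup>2 + (g t)\<^sup>2)"
    by simp
qed

lemma square_integrable_add:
  assumes "square_integrable M f" "square_integrable M g"
  shows "square_integrable M (\<lambda>t. f t + g t)"
proof -
  have "(\<lambda>t. (f t + g t)\<^sup>2) = (\<lambda>t. (f t)\<^sup>2 + 2 * (f t * g t) + (g t)\<^sup>2)"
    by (simp add: power2_sum algebra_simps)
  then show ?thesis
    using assms square_integrable_mult[OF assms] by (simp add: square_integrable_def borel_measurable_add)
qed

lemma square_integrable_minus:
  "square_integrable M f \<Longrightarrow> square_integrable M (\<lambda>t. - f t)"
  by (simp add: square_integrable_def)

lemma square_integrable_diff:
  assumes "square_integrable M f" "square_integrable M g"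
  shows "square_integrable M (\<lambda>t. f t - g t)"
  using square_integrable_add[OF assms(1) square_integrable_minus[OF assms(2)]] by simp

lemma discriminant_le_of_nonneg_quadratic:
  fixes a b c :: real
  assumes nonneg: "\<And>s. 0 \<le> a - 2 * s * b + s\<^sup>2 * c" and "0 \<le> c"
  shows "b\<^sup>2 \<le> a * c"
proof (cases "c = 0")
  case True
  have "b = 0"
  proof (rule ccontr)
    assume "b \<noteq> 0"
    have "0 \<le> a - 2 * ((a + 1) / (2 * b)) * b"
      using nonneg[of "(a + 1) / (2 * b)"] True by simp
    also have "\<dots> = -1"
      using \<open>b \<noteq> 0\<close> by (simp add: field_simps)
    finally show False by simp
  qed
  then show ?thesis using nonneg[of 0] True by simp
next
  case False
  with \<open>0 \<le> c\<close> have "c > 0" by simp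
  have "0 \<le> a - 2 * (b / c) * b + (b / c)\<^sup>2 * c"
    by (rule nonneg)
  also have "\<dots> = (a * c - b\<^sup>2) / c"
    using \<open>c > 0\<close> by (simp add: field_simps power2_eq_square)
  finally show ?thesis
    using \<open>c > 0\<close> by (simp add: zero_le_divide_iff)
qed

lemma Cauchy_Schwarz_integral:
  assumes f: "square_integrable M f" and g: "square_integrable M g"
  shows "(\<integral>t. f t * g t \<partial>M)\<^sup>2 \<le> (\<integral>t. (f t)\<^sup>2 \<partial>M) * (\<integral>t. (g t)\<^sup>2 \<partial>M)"
proof (rule discriminant_le_of_nonneg_quadratic)
  fix s :: real
  have "(\<lambda>t. (f t - s * g t)\<^sup>2) = (\<lambda>t. (f t)\<^sup>2 - 2 * s * (f t * g t) + s\<^sup>2 * (g t)\<^sup>2)"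
    by (auto simp: power2_diff algebra_simps power2_eq_square)
  then have "(\<integral>t. (f t - s * g t)\<^sup>2 \<partial>M)
      = (\<integral>t. (f t)\<^sup>2 \<partial>M) - 2 * s * (\<integral>t. f t * g t \<partial>M) + s\<^sup>2 * (\<integral>t. (g t)\<^sup>2 \<partial>M)"
    using square_integrable_mult[OF f g] f g by (simp add: square_integrable_def)
  moreover have "0 \<le> (\<integral>t. (f t - s * g t)\<^sup>2 \<partial>M)"
    by simp
  ultimately show "0 \<le> (\<integral>t. (f t)\<^sup>2 \<partial>M) - 2 * s * (\<integral>t. f t * g t \<partial>M) + s\<^sup>2 * (\<integral>t. (g t)\<^sup>2 \<partial>M)"
    by simp
qed simp

lemma integral_square_triangle_ineq:
  assumes f: "square_integrable M f" and g: "square_integrable M g"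
  shows "sqrt (\<integral>t. (f t + g t)\<^sup>2 \<partial>M) \<le> sqrt (\<integral>t. (f t)\<^sup>2 \<partial>M) + sqrt (\<integral>t. (g t)\<^sup>2 \<partial>M)"
proof -
  define F where "F = (\<integral>t. (f t)\<^sup>2 \<partial>M)"
  define G where "G = (\<integral>t. (g t)\<^sup>2 \<partial>M)"
  define P where "P = (\<integral>t. f t * g t \<partial>M)"
  have "F \<ge> 0" "G \<ge> 0"
    by (simp_all add: F_def G_def)
  have "P\<^sup>2 \<le> F * G"
    unfolding F_def G_def P_def using f g by (rule Cauchy_Schwarz_integral)
  then have "sqrt (P\<^sup>2) \<le> sqrt (F * G)"
    by (rule real_sqrt_le_mono)
  then have "P \<le> sqrt F * sqrt G"
    by (simp add: real_sqrt_mult abs_le_iff)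
  have "(\<lambda>t. (f t + g t)\<^sup>2) = (\<lambda>t. (f t)\<^sup>2 + 2 * (f t * g t) + (g t)\<^sup>2)"
    by (simp add: power2_sum algebra_simps)
  then have "(\<integral>t. (f t + g t)\<^sup>2 \<partial>M) = F + 2 * P + G"
    using square_integrable_mult[OF f g] f g by (simp add: square_integrable_def F_def G_def P_def)
  also have "\<dots> \<le> (sqrt F + sqrt G)\<^sup>2"
    using \<open>P \<le> sqrt F * sqrt G\<close> \<open>F \<ge> 0\<close> \<open>G \<ge> 0\<close> by (simp add: power2_sum)
  finally show ?thesis
    using \<open>F \<ge> 0\<close> \<open>G \<ge> 0\<close> by (simp add: F_def G_def real_le_lsqrt)
qed

(* The sequence space l2 is L2 of the counting measure on nat. *)
lemma square_integrable_count_space_nat: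
  "square_integrable (count_space UNIV) (a :: nat \<Rightarrow> real) \<longleftrightarrow> summable (\<lambda>m. (a m)\<^sup>2)"
  by (simp add: square_integrable_def integrable_count_space_nat_iff)

lemma suminf_square_triangle_ineq:
  fixes a b :: "nat \<Rightarrow> real"
  assumes a: "summable (\<lambda>m. (a m)\<^sup>2)" and b: "summable (\<lambda>m. (b m)\<^sup>2)"
  shows "summable (\<lambda>m. (a m + b m)\<^sup>2)"
    and "sqrt (\<Sum>m. (a m + b m)\<^sup>2) \<le> sqrt (\<Sum>m. (a m)\<^sup>2) + sqrt (\<Sum>m. (b m)\<^sup>2)"
proof -
  have sq: "square_integrable (count_space UNIV) a" "square_integrable (count_space UNIV) b"
    using a b by (simp_all only: square_integrable_count_space_nat)
  have integral_eq: "(\<integral>m. (u m)\<^sup>2 \<partial>count_space UNIV) = (\<Sum>m. (u m)\<^sup>2)"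
    if "square_integrable (count_space UNIV) u" for u :: "nat \<Rightarrow> real"
    using that by (intro integral_count_space_nat) (simp add: square_integrable_def)
  have "square_integrable (count_space UNIV) (\<lambda>m. a m + b m)"
    using sq by (rule square_integrable_add)
  then show "summable (\<lambda>m. (a m + b m)\<^sup>2)"
    by (simp only: square_integrable_count_space_nat)
  show "sqrt (\<Sum>m. (a m + b m)\<^sup>2) \<le> sqrt (\<Sum>m. (a m)\<^sup>2) + sqrt (\<Sum>m. (b m)\<^sup>2)"
    using integral_square_triangle_ineq[OF sq] integral_eq[OF sq(1)] integral_eq[OF sq(2)]
      integral_eq[OF \<open>square_integrable (count_space UNIV) (\<lambda>m. a m + b m)\<close>]
    by simp
qed

lemma suminf_square_perturbation_bounds:
  fixes a b :: "nat \<Rightarrow> real"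
  assumes a: "summable (\<lambda>m. (a m)\<^sup>2)" and b: "summable (\<lambda>m. (b m)\<^sup>2)"
    and lower: "A * H \<le> (\<Sum>m. (a m)\<^sup>2)" and upper: "(\<Sum>m. (a m)\<^sup>2) \<le> B * H"
    and small: "(\<Sum>m. (b m)\<^sup>2) \<le> R * H"
    and "0 \<le> H" "0 \<le> R" "R \<le> A"
  shows "(sqrt A - sqrt R)\<^sup>2 * H \<le> (\<Sum>m. (a m + b m)\<^sup>2)"
    and "(\<Sum>m. (a m + b m)\<^sup>2) \<le> (sqrt B + sqrt R)\<^sup>2 * H"
proof -
  define S where "S = (\<Sum>m. (a m + b m)\<^sup>2)"
  have "summable (\<lambda>m. (a m + b m)\<^sup>2)"
    by (rule suminf_square_triangle_ineq(1)[OF a b])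
  then have "0 \<le> S"
    by (simp add: S_def suminf_nonneg)
  have sqrt_small: "sqrt (\<Sum>m. (b m)\<^sup>2) \<le> sqrt R * sqrt H"
    using small by (simp flip: real_sqrt_mult)
  have "sqrt A * sqrt H \<le> sqrt (\<Sum>m. (a m)\<^sup>2)"
    using lower by (simp flip: real_sqrt_mult)
  also have "\<dots> \<le> sqrt S + sqrt (\<Sum>m. (b m)\<^sup>2)"
    using suminf_square_triangle_ineq(2)[OF \<open>summable (\<lambda>m. (a m + b m)\<^sup>2)\<close>, of "\<lambda>m. - b m"] b
    by (simp add: S_def)
  finally have "(sqrt A - sqrt R) * sqrt H \<le> sqrt S"
    using sqrt_small by (simp add: algebra_simps)
  moreover have "0 \<le> (sqrt A - sqrt R) * sqrt H"
    using \<open>R \<le> A\<close> \<open>0 \<le> H\<close> by simp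
  ultimately have "((sqrt A - sqrt R) * sqrt H)\<^sup>2 \<le> (sqrt S)\<^sup>2"
    by (rule power_mono)
  then show "(sqrt A - sqrt R)\<^sup>2 * H \<le> S"
    using \<open>0 \<le> S\<close> \<open>0 \<le> H\<close> by (simp add: power_mult_distrib)
  have "sqrt S \<le> sqrt (\<Sum>m. (a m)\<^sup>2) + sqrt (\<Sum>m. (b m)\<^sup>2)"
    unfolding S_def by (rule suminf_square_triangle_ineq(2)[OF a b])
  also have "\<dots> \<le> (sqrt B + sqrt R) * sqrt H"
    using add_mono[OF real_sqrt_le_mono[OF upper] sqrt_small] by (simp add: distrib_right real_sqrt_mult)
  finally have "(sqrt S)\<^sup>2 \<le> ((sqrt B + sqrt R) * sqrt H)\<^sup>2"
    by (rule power_mono) (simp add: \<open>0 \<le> S\<close>)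
  then show "S \<le> (sqrt B + sqrt R)\<^sup>2 * H"
    using \<open>0 \<le> S\<close> \<open>0 \<le> H\<close> by (simp add: power_mult_distrib)
qed

section \<open>Perturbation of frames\<close>

lemma L2_norm_square:
  "(L2_norm I f)\<^sup>2 = (\<integral>t. (f t)\<^sup>2 \<partial>lebesgue_on I)"
  by (simp add: L2_norm_def)

lemma L2_inner_square_le:
  assumes "sq_int I f" "sq_int I g"
  shows "(L2_inner I f g)\<^sup>2 \<le> (L2_norm I f)\<^sup>2 * (L2_norm I g)\<^sup>2"
  using Cauchy_Schwarz_integral assms
  by (simp add: L2_inner_def L2_norm_square sq_int_iff_square_integrable)

lemma L2_inner_add_right:
  assumes "sq_int I f" "sq_int I g" "sq_int I h"
  shows "L2_inner I f (\<lambda>t. g t + h t) = L2_inner I f g + L2_inner I f h"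
  using square_integrable_mult[of "lebesgue_on I" f g] square_integrable_mult[of "lebesgue_on I" f h] assms
  by (simp add: L2_inner_def sq_int_iff_square_integrable distrib_left)

lemma mult_square_one_pm_sqrt_divide:
  fixes A R :: real
  assumes "0 < A"
  shows "A * (1 - sqrt (R / A))\<^sup>2 = (sqrt A - sqrt R)\<^sup>2"
    and "A * (1 + sqrt (R / A))\<^sup>2 = (sqrt A + sqrt R)\<^sup>2"
proof -
  have "A * (1 - sqrt (R / A))\<^sup>2 = (sqrt A * (1 - sqrt R / sqrt A))\<^sup>2"
    using assms by (simp add: power_mult_distrib real_sqrt_divide)
  also have "sqrt A * (1 - sqrt R / sqrt A) = sqrt A - sqrt R"
    using assms by (simp add: right_diff_distrib)
  finally show "A * (1 - sqrt (R / A))\<^sup>2 = (sqrt A - sqrt R)\<^sup>2" .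
  have "A * (1 + sqrt (R / A))\<^sup>2 = (sqrt A * (1 + sqrt R / sqrt A))\<^sup>2"
    using assms by (simp add: power_mult_distrib real_sqrt_divide)
  also have "sqrt A * (1 + sqrt R / sqrt A) = sqrt A + sqrt R"
    using assms by (simp add: distrib_left)
  finally show "A * (1 + sqrt (R / A))\<^sup>2 = (sqrt A + sqrt R)\<^sup>2" .
qed

lemma suminf_L2_inner_square_le:
  assumes h: "sq_int I h" and d: "\<And>m. sq_int I (d m)"
    and c: "summable c" "\<And>m. (L2_norm I (d m))\<^sup>2 \<le> c m"
  shows "summable (\<lambda>m. (L2_inner I h (d m))\<^sup>2)"
    and "(\<Sum>m. (L2_inner I h (d m))\<^sup>2) \<le> (\<Sum>m. c m) * (L2_norm I h)\<^sup>2"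
proof -
  define H where "H = (L2_norm I h)\<^sup>2"
  have le: "(L2_inner I h (d m))\<^sup>2 \<le> H * c m" for m
    using L2_inner_square_le[OF h d, of m] mult_left_mono[OF c(2), of H m]
    by (simp add: H_def)
  have "summable (\<lambda>m. H * c m)"
    using c(1) by (rule summable_mult)
  then show summable: "summable (\<lambda>m. (L2_inner I h (d m))\<^sup>2)"
    by (rule summable_comparison_test') (simp add: le)
  show "(\<Sum>m. (L2_inner I h (d m))\<^sup>2) \<le> (\<Sum>m. c m) * H"
    using suminf_le[OF le summable \<open>summable (\<lambda>m. H * c m)\<close>] c(1)
    by (simp add: suminf_mult mult.commute)
qed

lemma is_frame_perturbation:
  assumes frame: "is_frame I f A B"
    and g: "\<And>m. sq_int I (g m)"
    and c: "summable c" "\<And>m. (L2_norm I (\<lambda>t. g m t - f m t))\<^sup>2 \<le> c m"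
    and lt: "(\<Sum>m. c m) < A"
  shows "is_frame I g (A * (1 - sqrt ((\<Sum>m. c m) / A))\<^sup>2) (B * (1 + sqrt ((\<Sum>m. c m) / B))\<^sup>2)"
proof -
  define R where "R = (\<Sum>m. c m)"
  have "A > 0" "B > 0" and f: "\<And>m. sq_int I (f m)"
    and frame_ineqs: "\<And>h. sq_int I h \<Longrightarrow> summable (\<lambda>m. (L2_inner I h (f m))\<^sup>2) \<and>
        A * (L2_norm I h)\<^sup>2 \<le> (\<Sum>m. (L2_inner I h (f m))\<^sup>2) \<and>
        (\<Sum>m. (L2_inner I h (f m))\<^sup>2) \<le> B * (L2_norm I h)\<^sup>2"
    using frame by (auto simp: is_frame_def)
  have d: "sq_int I (\<lambda>t. g m t - f m t)" for m
    using square_integrable_diff[of "lebesgue_on I" "g m" "f m"] f g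
    by (simp add: sq_int_iff_square_integrable)
  have "0 \<le> c m" for m
    using c(2)[of m] order_trans zero_le_power2 by blast
  then have "0 \<le> R"
    using c(1) by (simp add: R_def suminf_nonneg)
  have "sqrt R < sqrt A"
    using lt by (simp add: R_def)
  show ?thesis
    unfolding is_frame_def R_def[symmetric]
      mult_square_one_pm_sqrt_divide[OF \<open>A > 0\<close>] mult_square_one_pm_sqrt_divide[OF \<open>B > 0\<close>]
  proof (intro conjI allI impI)
    show "0 < (sqrt A - sqrt R)\<^sup>2"
      using \<open>sqrt R < sqrt A\<close> by simp
    show "0 < (sqrt B + sqrt R)\<^sup>2"
      using add_pos_nonneg[of "sqrt B" "sqrt R"] \<open>B > 0\<close> \<open>0 \<le> R\<close> by simp
    show "sq_int I (g m)" for m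
      by (rule g)
    fix h
    assume h: "sq_int I h"
    define H where "H = (L2_norm I h)\<^sup>2"
    define a where "a m = L2_inner I h (f m)" for m
    define b where "b m = L2_inner I h (\<lambda>t. g m t - f m t)" for m
    have inner_g: "L2_inner I h (g m) = a m + b m" for m
      using L2_inner_add_right[OF h f[of m] d[of m]] by (simp add: a_def b_def)
    have a: "summable (\<lambda>m. (a m)\<^sup>2)"
      and lower: "A * H \<le> (\<Sum>m. (a m)\<^sup>2)" and upper: "(\<Sum>m. (a m)\<^sup>2) \<le> B * H"
      using frame_ineqs[OF h] by (simp_all add: a_def H_def)
    have b: "summable (\<lambda>m. (b m)\<^sup>2)" and small: "(\<Sum>m. (b m)\<^sup>2) \<le> R * H"
      using suminf_L2_inner_square_le[OF h d c] by (simp_all add: b_def R_def H_def)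
    have "0 \<le> H" "R \<le> A"
      using lt by (simp_all add: H_def R_def)
    note bounds = suminf_square_perturbation_bounds[OF a b lower upper small \<open>0 \<le> H\<close> \<open>0 \<le> R\<close> \<open>R \<le> A\<close>]
    show "(sqrt A - sqrt R)\<^sup>2 * (L2_norm I h)\<^sup>2 \<le> (\<Sum>m. (L2_inner I h (g m))\<^sup>2)"
      "(\<Sum>m. (L2_inner I h (g m))\<^sup>2) \<le> (sqrt B + sqrt R)\<^sup>2 * (L2_norm I h)\<^sup>2"
      using bounds by (simp_all only: inner_g H_def)
    show "summable (\<lambda>m. (L2_inner I h (g m))\<^sup>2)"
      unfolding inner_g by (rule suminf_square_triangle_ineq(1)[OF a b])
  qed
qed

section \<open>The fractal convolution with the null function\<close>

lemma partition_less:
  assumes part: "is_partition x N" and "i < j" "j \<le> N"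
  shows "x i < x j"
  using assms(2,3)
proof (induction j)
  case 0
  then show ?case by simp
next
  case (Suc j)
  have "x j < x (Suc j)"
    using part Suc.prems by (simp add: is_partition_def)
  with Suc show ?case
    by (cases "i = j") auto
qed

lemma partition_le:
  "is_partition x N \<Longrightarrow> i \<le> j \<Longrightarrow> j \<le> N \<Longrightarrow> x i \<le> x j"
  using partition_less[of x N i j] by (cases "i = j") auto

lemma Isub_disjoint:
  assumes part: "is_partition x N" and "n \<in> {1..N}" "k \<in> {1..N}"
    and "t \<in> Isub x n" "t \<in> Isub x k"
  shows "n = k"
proof -
  have False if "i < j" "i \<in> {1..N}" "j \<in> {1..N}" "t \<in> Isub x i" "t \<in> Isub x j" for i j
  proof -
    have "t \<le> x i"
      using that by (auto simp: Isub_def split: if_splits)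
    also have "x i \<le> x (j - 1)"
      using partition_le[OF part, of i "j - 1"] that by auto
    also have "x (j - 1) < t"
      using that by (auto simp: Isub_def split: if_splits)
    finally show False by simp
  qed
  then show ?thesis
    using assms by (metis linorder_neqE_nat)
qed

lemma Linv_mem_Ival:
  assumes part: "is_partition x N" and n: "n \<in> {1..N}" and t: "t \<in> Isub x n"
  shows "Linv x N n t \<in> Ival x N"
proof -
  define r where "r = (t - x (n - 1)) / (x n - x (n - 1))"
  have "x (n - 1) < x n" "x 0 < x N"
    using n part partition_less[OF part] by (auto simp: is_partition_def)
  moreover have "x (n - 1) \<le> t" "t \<le> x n"
    using n t by (auto simp: Isub_def split: if_splits)
  ultimately have "0 \<le> r" "r \<le> 1" "x 0 < x N"
    by (auto simp: r_def)
  then have "0 \<le> r * (x N - x 0)" "r * (x N - x 0) \<le> x N - x 0"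
    using mult_right_mono[of r 1 "x N - x 0"] by simp_all
  moreover have "Linv x N n t = x 0 + r * (x N - x 0)"
    by (simp add: Linv_def r_def)
  ultimately show ?thesis
    by (simp add: Ival_def)
qed

lemma Linv_eq_affine:
  "Linv x N n t = (x 0 - x (n - 1) * ((x N - x 0) / (x n - x (n - 1))))
     + (x N - x 0) / (x n - x (n - 1)) * t"
  unfolding Linv_def by (simp add: divide_inverse algebra_simps)

lemma Linv_slope_pos:
  "is_partition x N \<Longrightarrow> n \<in> {1..N} \<Longrightarrow> 0 < (x N - x 0) / (x n - x (n - 1))"
  using partition_less[of x N] by (auto simp: is_partition_def)

lemma Linv_measurable:
  assumes "is_partition x N" "n \<in> {1..N}"
  shows "Linv x N n \<in> lebesgue \<rightarrow>\<^sub>M lebesgue"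
proof -
  define s where "s = (x N - x 0) / (x n - x (n - 1))"
  have "s \<noteq> 0"
    using Linv_slope_pos[OF assms] unfolding s_def by linarith
  then have "(\<lambda>t. (x 0 - x (n - 1) * s) + s * t) \<in> lebesgue \<rightarrow>\<^sub>M lebesgue"
    using lebesgue_affine_measurable[where c="\<lambda>_::real. s"] by simp
  moreover have "Linv x N n = (\<lambda>t. (x 0 - x (n - 1) * s) + s * t)"
    by (rule ext) (simp only: Linv_eq_affine s_def)
  ultimately show ?thesis
    by simp
qed

lemma nn_integral_Linv:
  assumes "is_partition x N" "n \<in> {1..N}" and \<phi>: "\<phi> \<in> borel_measurable lebesgue"
  shows "(\<integral>\<^sup>+t. \<phi> (Linv x N n t) \<partial>lebesgue)
    = ennreal ((x n - x (n - 1)) / (x N - x 0)) * (\<integral>\<^sup>+s. \<phi> s \<partial>lebesgue)"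
proof -
  define s where "s = (x N - x 0) / (x n - x (n - 1))"
  have "s > 0"
    using Linv_slope_pos[OF assms(1,2)] unfolding s_def .
  have Linv: "Linv x N n t = (x 0 - x (n - 1) * s) + s * t" for t
    by (simp only: Linv_eq_affine s_def)
  have "(\<integral>\<^sup>+s. \<phi> s \<partial>lebesgue) = ennreal \<bar>s\<bar> * (\<integral>\<^sup>+t. \<phi> ((x 0 - x (n - 1) * s) + s * t) \<partial>lebesgue)"
    using \<open>s > 0\<close> by (intro nn_integral_real_affine_lebesgue[OF \<phi>]) simp
  also have "\<dots> = ennreal s * (\<integral>\<^sup>+t. \<phi> (Linv x N n t) \<partial>lebesgue)"
    using \<open>s > 0\<close> by (simp only: Linv abs_of_pos)
  finally have "ennreal (1 / s) * (\<integral>\<^sup>+s. \<phi> s \<partial>lebesgue)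
      = ennreal (1 / s) * ennreal s * (\<integral>\<^sup>+t. \<phi> (Linv x N n t) \<partial>lebesgue)"
    by (simp add: mult.assoc)
  also have "ennreal (1 / s) * ennreal s = 1"
    using \<open>s > 0\<close> by (simp flip: ennreal_mult)
  finally show ?thesis
    by (simp add: s_def)
qed

lemma sum_partition_weights:
  assumes "is_partition x N"
  shows "(\<Sum>n\<in>{1..N}. ennreal ((x n - x (n - 1)) / (x N - x 0))) = 1"
proof -
  have "x 0 < x N"
    using partition_less[OF assms, of 0 N] assms by (simp add: is_partition_def)
  have "(\<Sum>n\<in>{1..N}. ennreal ((x n - x (n - 1)) / (x N - x 0)))
      = ennreal (\<Sum>n\<in>{1..N}. (x n - x (n - 1)) / (x N - x 0))"
    using partition_less[OF assms, of "n - 1" n for n] \<open>x 0 < x N\<close>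
    by (intro sum_ennreal) (simp add: less_imp_le)
  also have "(\<Sum>n\<in>{1..N}. x n - x (n - 1)) = x N - x 0"
    by (induction N) auto
  then have "(\<Sum>n\<in>{1..N}. (x n - x (n - 1)) / (x N - x 0)) = 1"
    using \<open>x 0 < x N\<close> by (simp flip: sum_divide_distrib)
  finally show ?thesis
    by simp
qed

lemma square_sum_if_at_most_one:
  fixes u :: "'a \<Rightarrow> real"
  assumes "finite S" and unique: "\<And>n k. n \<in> S \<Longrightarrow> k \<in> S \<Longrightarrow> P n \<Longrightarrow> P k \<Longrightarrow> n = k"
  shows "(\<Sum>n\<in>S. if P n then u n else 0)\<^sup>2 = (\<Sum>n\<in>S. if P n then (u n)\<^sup>2 else 0)"
proof (cases "\<exists>k\<in>S. P k")
  case True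
  then obtain k where "k \<in> S" "P k"
    by blast
  with unique have "{n \<in> S. P n} = {k}"
    by blast
  then show ?thesis
    unfolding sum.inter_filter[OF \<open>finite S\<close>, symmetric] by simp
next
  case False
  then show ?thesis
    by (simp add: sum.neutral)
qed

(* The pieces live on the disjoint intervals I_n, and Linv maps I_n affinely onto I,
   scaling Lebesgue measure by |I| / |I_n|. *)
lemma nn_integral_square_rescaled_pieces_le:
  fixes \<phi> :: "nat \<Rightarrow> real \<Rightarrow> real"
  assumes part: "is_partition x N"
    and \<phi>: "\<And>n. n \<in> {1..N} \<Longrightarrow> \<phi> n \<in> borel_measurable (lebesgue_on (Ival x N))"
  shows "(\<integral>\<^sup>+t. ennreal ((\<Sum>n\<in>{1..N}. if t \<in> Isub x n then \<phi> n (Linv x N n t) else 0)\<^sup>2)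
             \<partial>lebesgue_on (Ival x N))
    \<le> (\<Sum>n\<in>{1..N}. ennreal ((x n - x (n - 1)) / (x N - x 0))
             * (\<integral>\<^sup>+t. ennreal ((\<phi> n t)\<^sup>2) \<partial>lebesgue_on (Ival x N)))"
    (is "?lhs \<le> _")
proof -
  let ?I = "Ival x N"
  have I: "?I \<inter> space lebesgue \<in> sets lebesgue"
    by (simp add: Ival_def)
  define \<psi> where "\<psi> n s = ennreal ((\<phi> n s)\<^sup>2) * indicator ?I s" for n s
  have \<psi>_meas: "\<psi> n \<in> borel_measurable lebesgue" if "n \<in> {1..N}" for n
    using \<phi>[OF that] borel_measurable_restrict_space_iff_ennreal[OF I, of "\<lambda>s. ennreal ((\<phi> n s)\<^sup>2)"]
    by (simp add: \<psi>_def[abs_def])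
  have pointwise: "ennreal ((\<Sum>n\<in>{1..N}. if t \<in> Isub x n then \<phi> n (Linv x N n t) else 0)\<^sup>2)
      \<le> (\<Sum>n\<in>{1..N}. \<psi> n (Linv x N n t))" for t
  proof -
    have "(\<Sum>n\<in>{1..N}. if t \<in> Isub x n then \<phi> n (Linv x N n t) else 0)\<^sup>2
        = (\<Sum>n\<in>{1..N}. if t \<in> Isub x n then (\<phi> n (Linv x N n t))\<^sup>2 else 0)"
      using Isub_disjoint[OF part] by (intro square_sum_if_at_most_one) auto
    then have "ennreal ((\<Sum>n\<in>{1..N}. if t \<in> Isub x n then \<phi> n (Linv x N n t) else 0)\<^sup>2)
        = (\<Sum>n\<in>{1..N}. ennreal (if t \<in> Isub x n then (\<phi> n (Linv x N n t))\<^sup>2 else 0))"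
      by (simp add: sum_ennreal)
    also have "\<dots> \<le> (\<Sum>n\<in>{1..N}. \<psi> n (Linv x N n t))"
      using Linv_mem_Ival[OF part] by (intro sum_mono) (simp add: \<psi>_def)
    finally show ?thesis .
  qed
  have "?lhs = (\<integral>\<^sup>+t. ennreal ((\<Sum>n\<in>{1..N}. if t \<in> Isub x n then \<phi> n (Linv x N n t) else 0)\<^sup>2)
        * indicator ?I t \<partial>lebesgue)"
    by (rule nn_integral_restrict_space[OF I])
  also have "\<dots> \<le> (\<integral>\<^sup>+t. (\<Sum>n\<in>{1..N}. \<psi> n (Linv x N n t)) \<partial>lebesgue)"
    by (intro nn_integral_mono order_trans[OF _ pointwise]) (simp split: split_indicator)
  also have "\<dots> = (\<Sum>n\<in>{1..N}. \<integral>\<^sup>+t. \<psi> n (Linv x N n t) \<partial>lebesgue)"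
    using measurable_comp[OF Linv_measurable[OF part] \<psi>_meas]
    by (intro nn_integral_sum) (simp add: o_def)
  also have "\<dots> = (\<Sum>n\<in>{1..N}. ennreal ((x n - x (n - 1)) / (x N - x 0)) * (\<integral>\<^sup>+s. \<psi> n s \<partial>lebesgue))"
    using nn_integral_Linv[OF part _ \<psi>_meas] by simp
  also have "\<dots> = (\<Sum>n\<in>{1..N}. ennreal ((x n - x (n - 1)) / (x N - x 0))
             * (\<integral>\<^sup>+t. ennreal ((\<phi> n t)\<^sup>2) \<partial>lebesgue_on ?I))"
    by (simp add: \<psi>_def nn_integral_restrict_space[OF I])
  finally show ?thesis .
qed

lemma nn_integral_square_mult_le:
  fixes \<alpha> G :: "'a \<Rightarrow> real"
  assumes "G \<in> borel_measurable M" and "AE t in M. \<bar>\<alpha> t\<bar> \<le> \<Lambda>"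
  shows "(\<integral>\<^sup>+t. ennreal ((\<alpha> t * G t)\<^sup>2) \<partial>M) \<le> ennreal (\<Lambda>\<^sup>2) * (\<integral>\<^sup>+t. ennreal ((G t)\<^sup>2) \<partial>M)"
proof -
  have "(\<integral>\<^sup>+t. ennreal ((\<alpha> t * G t)\<^sup>2) \<partial>M) \<le> (\<integral>\<^sup>+t. ennreal (\<Lambda>\<^sup>2) * ennreal ((G t)\<^sup>2) \<partial>M)"
    using assms(2)
  proof (intro nn_integral_mono_AE, eventually_elim)
    case (elim t)
    then have "(\<alpha> t)\<^sup>2 \<le> \<Lambda>\<^sup>2"
      by (metis abs_ge_zero power2_abs power_mono)
    then have "(\<alpha> t * G t)\<^sup>2 \<le> \<Lambda>\<^sup>2 * (G t)\<^sup>2"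
      by (simp add: power_mult_distrib mult_right_mono)
    then show ?case
      by (simp flip: ennreal_mult)
  qed
  also have "\<dots> = ennreal (\<Lambda>\<^sup>2) * (\<integral>\<^sup>+t. ennreal ((G t)\<^sup>2) \<partial>M)"
    using assms(1) by (intro nn_integral_cmult) simp
  finally show ?thesis .
qed

lemma L2_norm_fractal_conv_zero_diff_le_conv:
  assumes part: "is_partition x N"
    and \<alpha>: "\<And>n. n \<in> {1..N} \<Longrightarrow> \<alpha> n \<in> borel_measurable (lebesgue_on (Ival x N))"
    and \<alpha>_le: "\<And>n. n \<in> {1..N} \<Longrightarrow> AE t in lebesgue_on (Ival x N). \<bar>\<alpha> n t\<bar> \<le> \<Lambda>"
    and F: "sq_int (Ival x N) F" and conv: "is_fractal_conv x N \<alpha> F (\<lambda>_. 0) G"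
  shows "(L2_norm (Ival x N) (\<lambda>t. G t - F t))\<^sup>2 \<le> \<Lambda>\<^sup>2 * (L2_norm (Ival x N) G)\<^sup>2"
proof -
  let ?M = "lebesgue_on (Ival x N)"
  let ?G2 = "\<integral>\<^sup>+t. ennreal ((G t)\<^sup>2) \<partial>?M"
  have G: "sq_int (Ival x N) G" and G_fix: "AE t in ?M. G t = Top x N \<alpha> F (\<lambda>_. 0) G t"
    using conv by (simp_all add: is_fractal_conv_def)
  then have G_meas: "G \<in> borel_measurable ?M" and G_int: "integrable ?M (\<lambda>t. (G t)\<^sup>2)"
    by (simp_all add: sq_int_def)
  have diff_eq: "AE t in ?M. G t - F t
      = (\<Sum>n\<in>{1..N}. if t \<in> Isub x n then \<alpha> n (Linv x N n t) * G (Linv x N n t) else 0)"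
    using G_fix by eventually_elim (simp add: Top_def cong: if_cong)
  have "integrable ?M (\<lambda>t. (G t - F t)\<^sup>2)"
    using square_integrable_diff[of ?M G F] F G
    by (simp add: sq_int_iff_square_integrable square_integrable_def)
  then have "ennreal ((L2_norm (Ival x N) (\<lambda>t. G t - F t))\<^sup>2) = (\<integral>\<^sup>+t. ennreal ((G t - F t)\<^sup>2) \<partial>?M)"
    by (simp add: L2_norm_square nn_integral_eq_integral)
  also have "\<dots> = (\<integral>\<^sup>+t. ennreal ((\<Sum>n\<in>{1..N}. if t \<in> Isub x n
        then \<alpha> n (Linv x N n t) * G (Linv x N n t) else 0)\<^sup>2) \<partial>?M)"
    using diff_eq by (intro nn_integral_cong_AE, eventually_elim) simp
  also have "\<dots> \<le> (\<Sum>n\<in>{1..N}. ennreal ((x n - x (n - 1)) / (x N - x 0))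
      * (\<integral>\<^sup>+t. ennreal ((\<alpha> n t * G t)\<^sup>2) \<partial>?M))"
    using \<alpha> G_meas
    by (intro nn_integral_square_rescaled_pieces_le[OF part, of "\<lambda>n t. \<alpha> n t * G t"] borel_measurable_times)
  also have "\<dots> \<le> (\<Sum>n\<in>{1..N}. ennreal ((x n - x (n - 1)) / (x N - x 0)) * (ennreal (\<Lambda>\<^sup>2) * ?G2))"
    using nn_integral_square_mult_le[OF G_meas \<alpha>_le] by (intro sum_mono mult_left_mono) auto
  also have "\<dots> = ennreal (\<Lambda>\<^sup>2) * ?G2"
    by (simp only: sum_partition_weights[OF part] flip: sum_distrib_right) simp
  also have "?G2 = ennreal ((L2_norm (Ival x N) G)\<^sup>2)"
    using G_int by (simp add: L2_norm_square nn_integral_eq_integral)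
  finally show ?thesis
    by (simp flip: ennreal_mult)
qed

lemma L2_norm_fractal_conv_zero_diff_le_source:
  assumes part: "is_partition x N"
    and \<alpha>: "\<And>n. n \<in> {1..N} \<Longrightarrow> \<alpha> n \<in> borel_measurable (lebesgue_on (Ival x N))"
    and \<alpha>_le: "\<And>n. n \<in> {1..N} \<Longrightarrow> AE t in lebesgue_on (Ival x N). \<bar>\<alpha> n t\<bar> \<le> \<Lambda>"
    and \<Lambda>: "0 \<le> \<Lambda>" "\<Lambda> < 1"
    and F: "sq_int (Ival x N) F" and conv: "is_fractal_conv x N \<alpha> F (\<lambda>_. 0) G"
  shows "(L2_norm (Ival x N) (\<lambda>t. G t - F t))\<^sup>2 \<le> (\<Lambda> / (1 - \<Lambda>))\<^sup>2 * (L2_norm (Ival x N) F)\<^sup>2"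
proof -
  let ?I = "Ival x N"
  define d where "d = L2_norm ?I (\<lambda>t. G t - F t)"
  have G: "sq_int ?I G"
    using conv by (simp add: is_fractal_conv_def)
  have "d\<^sup>2 \<le> (\<Lambda> * L2_norm ?I G)\<^sup>2"
    using L2_norm_fractal_conv_zero_diff_le_conv[OF part \<alpha> \<alpha>_le F conv]
    by (simp add: d_def power_mult_distrib)
  then have "d \<le> \<Lambda> * L2_norm ?I G"
    by (rule power2_le_imp_le) (simp add: \<Lambda> L2_norm_def)
  moreover have "L2_norm ?I G \<le> L2_norm ?I F + d"
    using integral_square_triangle_ineq[of "lebesgue_on ?I" F "\<lambda>t. G t - F t"]
      square_integrable_diff[of "lebesgue_on ?I" G F] F G
    by (simp add: L2_norm_def d_def sq_int_iff_square_integrable)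
  ultimately have "d * (1 - \<Lambda>) \<le> \<Lambda> * L2_norm ?I F"
    using mult_left_mono[of "L2_norm ?I G" "L2_norm ?I F + d" \<Lambda>] \<Lambda>
    by (simp add: algebra_simps)
  then have "d \<le> \<Lambda> / (1 - \<Lambda>) * L2_norm ?I F"
    using \<Lambda> by (simp add: pos_le_divide_eq)
  then have "d\<^sup>2 \<le> (\<Lambda> / (1 - \<Lambda>) * L2_norm ?I F)\<^sup>2"
    by (rule power_mono) (simp add: d_def L2_norm_def)
  then show ?thesis
    by (simp only: d_def power_mult_distrib)
qed

lemma AE_abs_le_of_Linf_norm_le:
  assumes "Linf_norm I h \<le> ereal L"
  shows "AE t in lebesgue_on I. \<bar>h t\<bar> \<le> L"
  using esssup_AE[of "\<lambda>t. ereal \<bar>h t\<bar>" "lebesgue_on I"]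
proof eventually_elim
  case (elim t)
  then have "ereal \<bar>h t\<bar> \<le> ereal L"
    using assms unfolding Linf_norm_def by (rule order_trans)
  then show ?case
    by simp
qed

lemma Linf_norm_Ival_nonneg:
  assumes "is_partition x N"
  shows "0 \<le> Linf_norm (Ival x N) h"
proof -
  have "x 0 < x N"
    using partition_less[OF assms, of 0 N] assms by (simp add: is_partition_def)
  then have "emeasure (lebesgue_on (Ival x N)) (space (lebesgue_on (Ival x N))) \<noteq> 0"
    by (simp add: Ival_def emeasure_restrict_space space_restrict_space)
  then have "esssup (lebesgue_on (Ival x N)) (\<lambda>_. 0 :: ereal) = 0"
    by (rule esssup_const)
  moreover have "esssup (lebesgue_on (Ival x N)) (\<lambda>_. 0 :: ereal) \<le> Linf_norm (Ival x N) h"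
    unfolding Linf_norm_def by (rule esssup_mono) simp_all
  ultimately show ?thesis
    by simp
qed

theorem theorem7p2:
  fixes x :: "nat \<Rightarrow> real" and N :: nat
    and f :: "nat \<Rightarrow> real \<Rightarrow> real"
    and \<alpha> :: "nat \<Rightarrow> nat \<Rightarrow> real \<Rightarrow> real"
    and \<Lambda> :: "nat \<Rightarrow> real"
    and g :: "nat \<Rightarrow> real \<Rightarrow> real"
    and A B :: real
  assumes part: "is_partition x N"
    and frame: "is_frame (Ival x N) f A B"
    and alpha_meas: "\<And>m n. n \<in> {1..N} \<Longrightarrow> \<alpha> m n \<in> borel_measurable (lebesgue_on (Ival x N))"
    and Lambda_def: "\<And>m. ereal (\<Lambda> m) = Max ((\<lambda>n. Linf_norm (Ival x N) (\<alpha> m n)) ` {1..N})"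
    and Lambda_lt1: "\<And>m. \<Lambda> m < 1"
    and conv: "\<And>m. is_fractal_conv x N (\<alpha> m) (f m) (\<lambda>_. 0) (g m)"
    and R_summable: "summable (\<lambda>m. (\<Lambda> m / (1 - \<Lambda> m))\<^sup>2 * (L2_norm (Ival x N) (f m))\<^sup>2)"
    and R_lt: "(\<Sum>m. (\<Lambda> m / (1 - \<Lambda> m))\<^sup>2 * (L2_norm (Ival x N) (f m))\<^sup>2) < A"
  shows "is_frame (Ival x N) g
     (A * (1 - sqrt ((\<Sum>m. (\<Lambda> m / (1 - \<Lambda> m))\<^sup>2 * (L2_norm (Ival x N) (f m))\<^sup>2) / A))\<^sup>2)
     (B * (1 + sqrt ((\<Sum>m. (\<Lambda> m / (1 - \<Lambda> m))\<^sup>2 * (L2_norm (Ival x N) (f m))\<^sup>2) / B))\<^sup>2)"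
proof (rule is_frame_perturbation[OF frame _ R_summable _ R_lt])
  fix m
  have Linf_le: "Linf_norm (Ival x N) (\<alpha> m n) \<le> ereal (\<Lambda> m)" if "n \<in> {1..N}" for n
    unfolding Lambda_def using that by (intro Max_ge) auto
  have "1 \<in> {1..N}"
    using part by (simp add: is_partition_def)
  then have "0 \<le> \<Lambda> m"
    using order_trans[OF Linf_norm_Ival_nonneg[OF part] Linf_le] by (simp del: atLeastAtMost_iff)
  moreover have "sq_int (Ival x N) (f m)"
    using frame by (simp add: is_frame_def)
  ultimately show "(L2_norm (Ival x N) (\<lambda>t. g m t - f m t))\<^sup>2
      \<le> (\<Lambda> m / (1 - \<Lambda> m))\<^sup>2 * (L2_norm (Ival x N) (f m))\<^sup>2"
    using AE_abs_le_of_Linf_norm_le[OF Linf_le] Lambda_lt1 conv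
    by (intro L2_norm_fractal_conv_zero_diff_le_source[OF part alpha_meas]) auto
  show "sq_int (Ival x N) (g m)"
    using conv[of m] by (simp add: is_fractal_conv_def)
qed

end
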